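(* Let $\Omega=(0,\infty)\times\mathbb{R}^n$. The only bounded classical solution of the Cauchy problem $\mathcal{H}u=0$ in $\Omega$, $u(0,x)=0$ for $x\in\mathbb{R}^n$, is $u\equiv0$.
   Context: Let $X_1,\dots,X_m$ be smooth vector fields on $\mathbb{R}^n$, linearly independent in the vector space of smooth vector fields, satisfying: (H.1) there are reals $1=\sigma_1\le\dots\le\sigma_n$ such that, with $\delta_\lambda(x)=(\lambda^{\sigma_1}x_1,\dots,\lambda^{\sigma_n}x_n)$, $X_j(f\circ\delta_\lambda)=\lambda(X_jf)\circ\delta_\lambda$ for all $\lambda>0$, $f\in C^\infty(\mathbb{R}^n)$, $j=1,\dots,m$; (H.2) $\dim\{Y(0):Y\in\mathrm{Lie}\{X_1,\dots,X_m\}\}=n$, where $\mathrm{Lie}\{\cdot\}$ is the smallest Lie subalgebra of smooth vector fields containing the $X_j$. Assume $\dim\mathrm{Lie}\{X_1,\dots,X_m\}>n$. Let $\mathcal{H}=\sum_{j=1}^mX_j^2-\partial_t$ on $\mathbb{R}^{1+n}$. A classical solution is a function $u\in C^2(\Omega)$ with $\mathcal{H}u=0$ on $\Omega$, continuous up to $\overline{\Omega}$, with the prescribed values at $t=0$. *)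

theory Defs
  imports "HOL-Analysis.Analysis"
begin

fun Ck_on :: "nat \<Rightarrow> 'a::euclidean_space set \<Rightarrow> ('a \<Rightarrow> real) \<Rightarrow> bool" where
  "Ck_on 0 S f = continuous_on S f"
| "Ck_on (Suc k) S f =
     ((\<forall>x\<in>S. f differentiable (at x)) \<and>
      (\<forall>b\<in>Basis. Ck_on k S (\<lambda>x. frechet_derivative f (at x) b)))"

definition smooth_fun :: "('a::euclidean_space \<Rightarrow> real) \<Rightarrow> bool" where
  "smooth_fun f \<longleftrightarrow> (\<forall>k. Ck_on k UNIV f)"

type_synonym 'n vf = "real^'n \<Rightarrow> real^'n"

definition smooth_vf :: "'n::finite vf \<Rightarrow> bool" where
  "smooth_vf X \<longleftrightarrow> (\<forall>i. smooth_fun (\<lambda>x. X x $ i))"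

definition vf_act :: "'n::finite vf \<Rightarrow> (real^'n \<Rightarrow> real) \<Rightarrow> real^'n \<Rightarrow> real" where
  "vf_act X f x = frechet_derivative f (at x) (X x)"

definition lie_bracket :: "'n::finite vf \<Rightarrow> 'n vf \<Rightarrow> 'n vf" where
  "lie_bracket X Y x = frechet_derivative Y (at x) (X x) - frechet_derivative X (at x) (Y x)"

inductive_set lie_gen :: "(nat \<Rightarrow> 'n::finite vf) \<Rightarrow> nat \<Rightarrow> 'n vf set"
  for X :: "nat \<Rightarrow> 'n vf" and m :: nat where
  gen: "j < m \<Longrightarrow> X j \<in> lie_gen X m"
| zero: "(\<lambda>x. 0) \<in> lie_gen X m"
| add: "Y \<in> lie_gen X m \<Longrightarrow> Z \<in> lie_gen X m \<Longrightarrow> (\<lambda>x. Y x + Z x) \<in> lie_gen X m"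
| scale: "Y \<in> lie_gen X m \<Longrightarrow> (\<lambda>x. c *\<^sub>R Y x) \<in> lie_gen X m"
| bracket: "Y \<in> lie_gen X m \<Longrightarrow> Z \<in> lie_gen X m \<Longrightarrow> lie_bracket Y Z \<in> lie_gen X m"

definition vf_indep :: "'i set \<Rightarrow> ('i \<Rightarrow> 'n::finite vf) \<Rightarrow> bool" where
  "vf_indep I Y \<longleftrightarrow>
     (\<forall>c. (\<forall>x. (\<Sum>i\<in>I. c i *\<^sub>R Y i x) = 0) \<longrightarrow> (\<forall>i\<in>I. c i = 0))"

definition dil :: "('n::finite \<Rightarrow> real) \<Rightarrow> real \<Rightarrow> real^'n \<Rightarrow> real^'n" where
  "dil \<sigma> r x = (\<chi> i. (r powr \<sigma> i) * x $ i)"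

definition heat_op :: "(nat \<Rightarrow> 'n::finite vf) \<Rightarrow> nat \<Rightarrow> (real \<times> (real^'n) \<Rightarrow> real)
                        \<Rightarrow> real \<times> (real^'n) \<Rightarrow> real" where
  "heat_op X m u p =
     (\<Sum>j<m. vf_act (X j) (\<lambda>y. vf_act (X j) (\<lambda>z. u (fst p, z)) y) (snd p))
     - deriv (\<lambda>s. u (s, snd p)) (fst p)"

end

theory Submission
  imports Defs
begin

text \<open>Let \<open>Q = (\<Sum>i. \<sigma> i)\<close> and \<open>\<psi> y = (\<Sum>i. (1 + y\<^sub>i\<^sup>2) powr (Q / \<sigma> i))\<close>.
  By (H.1) the coefficients \<open>X\<^sub>j\<^sup>i\<close> and \<open>X\<^sub>j X\<^sub>j\<^sup>i\<close> are homogeneous of degrees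
  \<open>\<sigma> i - 1\<close> and \<open>\<sigma> i - 2\<close> under the dilations, so they are dominated by powers of the
  homogeneous norm \<open>\<psi> powr (1 / 2Q)\<close>; this makes \<open>\<psi>\<close> a supersolution up to a constant,
  \<open>\<Sum>\<^sub>j X\<^sub>j\<^sup>2 \<psi> \<le> K \<psi>\<close>, and \<open>\<psi>\<close> grows at least like \<open>|y|\<close>.
  For any real \<open>s\<close>, \<open>\<epsilon> > 0\<close> and \<open>C > K\<close> the function \<open>W = s u - \<epsilon> e\<^sup>C\<^sup>t \<psi>\<close> is
  \<open>\<le> 0\<close> at \<open>t = 0\<close> and far out in space, since \<open>u\<close> is bounded. A positive value of \<open>W\<close>
  would therefore be dominated by a maximum at a point with \<open>t > 0\<close> inside a cylinder,
  where \<open>X\<^sub>j\<^sup>2 W \<le> 0\<close> and \<open>\<partial>\<^sub>t W \<ge> 0\<close>; with \<open>H u = 0\<close> this gives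
  \<open>\<epsilon> e\<^sup>C\<^sup>t (C - K) \<psi> \<le> 0\<close>, which is absurd. Letting \<open>\<epsilon> \<rightarrow> 0\<close> yields \<open>s u \<le> 0\<close> for all \<open>s\<close>.\<close>

section \<open>Second-order calculus for vector fields\<close>

lemma has_derivative_vec_lambda:
  fixes f :: "'n::finite \<Rightarrow> 'a::real_normed_vector \<Rightarrow> real"
  assumes "\<And>i. (f i has_derivative f' i) (at a)"
  shows "((\<lambda>x. \<chi> i. f i x) has_derivative (\<lambda>h. \<chi> i. f' i h)) (at a)"
  by (subst has_derivative_componentwise_within) (auto simp: Basis_vec_def inner_axis assms)

lemma has_derivative_component: "((\<lambda>x::real^'n::finite. x$i) has_derivative (\<lambda>v. v$i)) (at x)"
  by (rule bounded_linear_imp_has_derivative) (rule bounded_linear_vec_nth)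

lemma vf_act_component: "vf_act X (\<lambda>x. x$i) y = X y $ i"
  unfolding vf_act_def using frechet_derivative_at[OF has_derivative_component] by metis

lemma linear_eq_inner_axis:
  fixes L :: "real^'n::finite \<Rightarrow> real"
  assumes "linear L"
  shows "L v = v \<bullet> (\<chi> k. L (axis k 1))"
proof -
  have "L v = L (\<Sum>k\<in>UNIV. v$k *\<^sub>R axis k 1)"
    using basis_expansion[of v] by (simp add: scalar_mult_eq_scaleR)
  also have "\<dots> = (\<Sum>k\<in>UNIV. v$k * L (axis k 1))"
    using assms by (simp add: linear_sum linear_scale)
  finally show ?thesis by (simp add: inner_vec_def)
qed

lemma gderiv_partials:
  fixes f :: "real^'n::finite \<Rightarrow> real"
  assumes "f differentiable (at y)"
  shows "GDERIV f y :> (\<chi> k. frechet_derivative f (at y) (axis k 1))"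
proof -
  have d: "(f has_derivative frechet_derivative f (at y)) (at y)"
    using assms frechet_derivative_works by blast
  then have "frechet_derivative f (at y) = (\<lambda>v. v \<bullet> (\<chi> k. frechet_derivative f (at y) (axis k 1)))"
    using linear_eq_inner_axis has_derivative_linear by blast
  with d show ?thesis unfolding gderiv_def by simp
qed

lemma vf_act_gderiv: "GDERIV f y :> g \<Longrightarrow> vf_act X f y = X y \<bullet> g"
  unfolding vf_act_def gderiv_def by (metis frechet_derivative_at)

lemma vf_act_twice:
  assumes grad: "\<And>y. GDERIV f y :> grad y"
    and hess: "(grad has_derivative H) (at x)" and dX: "(X has_derivative DX) (at x)"
  shows "vf_act X (vf_act X f) x = DX (X x) \<bullet> grad x + X x \<bullet> H (X x)"
proof -
  have "vf_act X f = (\<lambda>y. X y \<bullet> grad y)"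
    using vf_act_gderiv[OF grad] by blast
  moreover have "((\<lambda>y. X y \<bullet> grad y) has_derivative (\<lambda>h. X x \<bullet> H h + DX h \<bullet> grad x)) (at x)"
    by (rule has_derivative_inner[OF dX hess])
  ultimately show ?thesis
    unfolding vf_act_def by (metis (no_types, lifting) add.commute frechet_derivative_at)
qed

lemma deriv2_nonpos_at_right_max:
  fixes g \<phi> :: "real \<Rightarrow> real"
  assumes g: "\<And>s. (g has_real_derivative \<phi> s) (at s)" and \<phi>: "(\<phi> has_real_derivative l) (at 0)"
    and "\<phi> 0 = 0" and max: "\<forall>\<^sub>F s in at_right 0. g s \<le> g 0"
  shows "l \<le> 0"
proof (rule ccontr)
  assume "\<not> l \<le> 0"
  then obtain d where "d > 0" "\<forall>h>0. h < d \<longrightarrow> \<phi> 0 < \<phi> h"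
    using DERIV_pos_inc_right[OF \<phi>] by auto
  then have "\<forall>\<^sub>F s in at_right 0. 0 < \<phi> s"
    using \<open>\<phi> 0 = 0\<close> by (auto simp: eventually_at_right_field)
  with max have "\<forall>\<^sub>F s in at_right 0. g s \<le> g 0 \<and> 0 < \<phi> s" by (rule eventually_conj)
  then obtain \<delta> where "\<delta> > 0" and \<delta>: "\<And>s. 0 < s \<Longrightarrow> s < \<delta> \<Longrightarrow> g s \<le> g 0 \<and> 0 < \<phi> s"
    unfolding eventually_at_right_field by auto
  obtain z where z: "0 < z" "z < \<delta> / 2" "g (\<delta> / 2) - g 0 = (\<delta> / 2 - 0) * \<phi> z"
    using MVT2[of 0 "\<delta> / 2" g \<phi>] \<open>\<delta> > 0\<close> g by auto
  moreover have "0 < \<delta> / 2 * \<phi> z" using \<delta>[of z] z \<open>\<delta> > 0\<close> by simp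
  ultimately have "g (\<delta> / 2) > g 0" by simp
  then show False using \<delta>[of "\<delta> / 2"] \<open>\<delta> > 0\<close> by simp
qed

lemma hessian_nonpos_at_local_max:
  fixes F :: "'a::real_inner \<Rightarrow> real"
  assumes grad: "\<And>y. GDERIV F y :> grad y" and hess: "(grad has_derivative H) (at x)"
    and "e > 0" and max: "\<forall>y\<in>ball x e. F y \<le> F x"
  shows "grad x = 0" and "a \<bullet> H a \<le> 0"
proof -
  have "(\<lambda>h. h \<bullet> grad x) = (\<lambda>h. 0)"
    using grad[of x] \<open>e > 0\<close> max unfolding gderiv_def
    by (intro differential_zero_maxmin[of x "ball x e"]) auto
  from fun_cong[OF this, of "grad x"] show grad0: "grad x = 0" by simp
  define \<phi> where "\<phi> s = a \<bullet> grad (x + s *\<^sub>R a)" for s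
  have line: "((\<lambda>s. x + s *\<^sub>R a) has_derivative (\<lambda>h. h *\<^sub>R a)) (at s)" for s
    by (auto intro!: derivative_eq_intros)
  have "(\<phi> has_derivative (\<lambda>h. a \<bullet> H (h *\<^sub>R a))) (at 0)"
    unfolding \<phi>_def using has_derivative_compose[OF line, of grad H] hess
    by (auto intro!: has_derivative_inner_right simp: o_def)
  moreover have "linear H" using hess has_derivative_linear by blast
  ultimately have d\<phi>: "(\<phi> has_real_derivative a \<bullet> H a) (at 0)"
    by (simp add: has_field_derivative_def linear_scale mult_commute_abs)
  have dF: "((\<lambda>s. F (x + s *\<^sub>R a)) has_real_derivative \<phi> s) (at s)" for s
    using has_derivative_compose[OF line grad[unfolded gderiv_def]]
    by (simp add: has_field_derivative_def o_def \<phi>_def inner_commute mult_commute_abs)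
  have "((\<lambda>s. x + s *\<^sub>R a) \<longlongrightarrow> x) (at_right 0)"
    by (auto intro!: tendsto_eq_intros)
  then have "\<forall>\<^sub>F s in at_right 0. dist (x + s *\<^sub>R a) x < e"
    using \<open>e > 0\<close> by (rule tendstoD)
  then have ev: "\<forall>\<^sub>F s in at_right 0. F (x + s *\<^sub>R a) \<le> F (x + 0 *\<^sub>R a)"
    by (rule eventually_mono) (use max in \<open>simp add: dist_commute\<close>)
  show "a \<bullet> H a \<le> 0"
    by (rule deriv2_nonpos_at_right_max[OF dF d\<phi> _ ev]) (simp add: \<phi>_def grad0)
qed

lemma vf_act_twice_nonpos_at_local_max:
  assumes grad: "\<And>y. GDERIV F y :> grad y" and hess: "(grad has_derivative H) (at x)"
    and dX: "(X has_derivative DX) (at x)"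
    and "e > 0" and "\<forall>y\<in>ball x e. F y \<le> F x"
  shows "vf_act X (vf_act X F) x \<le> 0"
  using hessian_nonpos_at_local_max[OF grad hess assms(4,5)] vf_act_twice[OF grad hess dX] by simp

lemma vf_act_twice_le_at_local_max:
  assumes f: "\<And>y. GDERIV f y :> gf y" "(gf has_derivative Hf) (at x)"
    and g: "\<And>y. GDERIV g y :> gg y" "(gg has_derivative Hg) (at x)"
    and X: "(X has_derivative DX) (at x)"
    and "e > 0" and max: "\<forall>y\<in>ball x e. a * f y - b * g y \<le> a * f x - b * g x"
  shows "a * vf_act X (vf_act X f) x \<le> b * vf_act X (vf_act X g) x"
proof -
  have F: "GDERIV (\<lambda>y. a * f y - b * g y) y :> a *\<^sub>R gf y - b *\<^sub>R gg y" for y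
    using f(1)[of y] g(1)[of y] unfolding gderiv_def
    by (auto intro!: derivative_eq_intros simp: inner_diff_right)
  have HF: "((\<lambda>y. a *\<^sub>R gf y - b *\<^sub>R gg y) has_derivative (\<lambda>h. a *\<^sub>R Hf h - b *\<^sub>R Hg h)) (at x)"
    using f(2) g(2) by (auto intro!: derivative_eq_intros)
  have "vf_act X (vf_act X (\<lambda>y. a * f y - b * g y)) x \<le> 0"
    by (rule vf_act_twice_nonpos_at_local_max[OF F HF X \<open>e > 0\<close> max])
  then show ?thesis
    unfolding vf_act_twice[OF F HF X] vf_act_twice[OF f X] vf_act_twice[OF g X]
    by (simp add: inner_diff_right algebra_simps)
qed

lemma deriv_nonneg_at_left_max:
  fixes g :: "real \<Rightarrow> real"
  assumes "(g has_real_derivative l) (at t)" and "\<forall>\<tau>. t - d < \<tau> \<and> \<tau> \<le> t \<longrightarrow> g \<tau> \<le> g t"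
    and "d > 0"
  shows "l \<ge> 0"
proof (rule ccontr)
  assume "\<not> l \<ge> 0"
  then obtain d' where "d' > 0" and d': "\<forall>h>0. h < d' \<longrightarrow> g t < g (t - h)"
    using DERIV_neg_dec_left[OF assms(1)] by auto
  define h where "h = min (d' / 2) (d / 2)"
  have "h > 0" "h < d'" "h < d" using \<open>d' > 0\<close> \<open>d > 0\<close> by (auto simp: h_def)
  then show False using d' assms(2)[rule_format, of "t - h"] by force
qed

section \<open>Homogeneous vector fields\<close>

lemma Ck_on_const: "Ck_on k S (\<lambda>x. c)"
proof (induction k arbitrary: c)
  case 0
  then show ?case by simp
next
  case (Suc k)
  have "(\<lambda>x. frechet_derivative (\<lambda>x. c) (at x) b) = (\<lambda>x. 0)" for b
    using frechet_derivative_at[OF has_derivative_const] by metis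
  then show ?case using Suc by simp
qed

lemma smooth_fun_component: "smooth_fun (\<lambda>x::real^'n::finite. x$i)"
  unfolding smooth_fun_def
proof
  fix k
  have "(\<lambda>x. frechet_derivative (\<lambda>x::real^'n. x$i) (at x) b) = (\<lambda>x. b$i)" for b
    using frechet_derivative_at[OF has_derivative_component] by metis
  then show "Ck_on k UNIV (\<lambda>x::real^'n. x$i)"
    using has_derivative_component Ck_on_const by (cases k) (auto simp: differentiable_def continuous_on_component)
qed

lemma smooth_fun_differentiable: "smooth_fun f \<Longrightarrow> f differentiable (at x)"
  unfolding smooth_fun_def by (metis Ck_on.simps(2) UNIV_I)

lemma smooth_fun_continuous: "smooth_fun f \<Longrightarrow> continuous_on UNIV f"
  unfolding smooth_fun_def by (metis Ck_on.simps(1))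

lemma smooth_fun_partial_continuous:
  "smooth_fun f \<Longrightarrow> b \<in> Basis \<Longrightarrow> continuous_on UNIV (\<lambda>x. frechet_derivative f (at x) b)"
  unfolding smooth_fun_def by (metis Ck_on.simps(1) Ck_on.simps(2))

lemma smooth_vf_has_derivative:
  assumes "smooth_vf X"
  shows "(X has_derivative (\<lambda>h. \<chi> i. frechet_derivative (\<lambda>y. X y $ i) (at x) h)) (at x)"
proof -
  have "((\<lambda>y. X y $ i) has_derivative frechet_derivative (\<lambda>y. X y $ i) (at x)) (at x)" for i
    using assms smooth_fun_differentiable frechet_derivative_works unfolding smooth_vf_def by blast
  from has_derivative_vec_lambda[of "\<lambda>i y. X y $ i", OF this] show ?thesis by simp
qed

lemma vf_act_component_continuous:
  assumes "smooth_vf X"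
  shows "continuous_on UNIV (vf_act X (\<lambda>y. X y $ i))"
proof -
  have sm: "smooth_fun (\<lambda>y. X y $ k)" for k using assms by (simp add: smooth_vf_def)
  have "vf_act X (\<lambda>y. X y $ i) =
      (\<lambda>y. X y \<bullet> (\<chi> k. frechet_derivative (\<lambda>y. X y $ i) (at y) (axis k 1)))"
    using vf_act_gderiv[OF gderiv_partials[OF smooth_fun_differentiable[OF sm]]] by blast
  moreover have "continuous_on UNIV (\<lambda>y. frechet_derivative (\<lambda>y. X y $ i) (at y) (axis k 1))" for k
    using smooth_fun_partial_continuous[OF sm] by (simp add: axis_in_Basis_iff)
  then have "continuous_on UNIV (\<lambda>y. \<chi> k. frechet_derivative (\<lambda>y. X y $ i) (at y) (axis k 1))"
    by (intro continuous_on_vec_lambda)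
  moreover have "continuous_on UNIV X"
    using continuous_on_vec_lambda[of UNIV "\<lambda>i y. X y $ i"] smooth_fun_continuous[OF sm] by simp
  ultimately show ?thesis by (simp add: continuous_on_inner)
qed

lemma vf_act_const_mult:
  assumes "f differentiable (at x)"
  shows "vf_act X (\<lambda>y. c * f y) x = c * vf_act X f x"
proof -
  have "((\<lambda>y. c * f y) has_derivative (\<lambda>v. c * frechet_derivative f (at x) v)) (at x)"
    using assms by (intro has_derivative_mult_right) (simp add: frechet_derivative_works)
  from frechet_derivative_at[OF this] show ?thesis unfolding vf_act_def by metis
qed

context
  fixes \<sigma> :: "'n::finite \<Rightarrow> real" and X :: "'n vf"
  assumes hom: "\<And>r f x. r > 0 \<Longrightarrow> smooth_fun f \<Longrightarrow>
                  vf_act X (f \<circ> dil \<sigma> r) x = r * vf_act X f (dil \<sigma> r x)"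
begin

lemma vf_component_dil:
  assumes "r > 0"
  shows "X (dil \<sigma> r x) $ i = r powr (\<sigma> i - 1) * X x $ i"
proof -
  have "r * X (dil \<sigma> r x) $ i = vf_act X ((\<lambda>x. x$i) \<circ> dil \<sigma> r) x"
    using hom[OF assms smooth_fun_component] by (simp add: vf_act_component)
  also have "\<dots> = vf_act X (\<lambda>x. r powr \<sigma> i * x $ i) x" by (simp add: o_def dil_def)
  also have "\<dots> = r powr \<sigma> i * X x $ i"
    using vf_act_const_mult has_derivative_component vf_act_component by (metis differentiable_def)
  finally show ?thesis using assms by (simp add: powr_diff field_simps)
qed

lemma vf_act_component_dil:
  assumes "r > 0" and sm: "smooth_fun (\<lambda>y. X y $ i)"
  shows "vf_act X (\<lambda>y. X y $ i) (dil \<sigma> r x) = r powr (\<sigma> i - 2) * vf_act X (\<lambda>y. X y $ i) x"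
proof -
  have "r * vf_act X (\<lambda>y. X y $ i) (dil \<sigma> r x) = vf_act X ((\<lambda>y. X y $ i) \<circ> dil \<sigma> r) x"
    using hom[OF assms] by simp
  also have "\<dots> = vf_act X (\<lambda>y. r powr (\<sigma> i - 1) * X y $ i) x"
    using vf_component_dil[OF assms(1)] by (simp add: o_def)
  also have "\<dots> = r powr (\<sigma> i - 1) * vf_act X (\<lambda>y. X y $ i) x"
    by (rule vf_act_const_mult[OF smooth_fun_differentiable[OF sm]])
  finally show ?thesis using assms by (simp add: powr_diff field_simps power2_eq_square)
qed

end

lemma dil_homogeneous_bound:
  fixes f \<rho> :: "real^'n::finite \<Rightarrow> real"
  assumes "continuous_on UNIV f" and hom: "\<And>r x. r > 0 \<Longrightarrow> f (dil \<sigma> r x) = r powr d * f x"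
    and \<rho>_pos: "\<And>y. \<rho> y > 0" and \<rho>_dominates: "\<And>y i. \<bar>y$i\<bar> \<le> \<rho> y powr \<sigma> i"
  shows "\<exists>A. \<forall>y. \<bar>f y\<bar> \<le> A * \<rho> y powr d"
proof -
  let ?Q = "cbox (-1) (1::real^'n)"
  have "compact (f ` ?Q)"
    by (intro compact_continuous_image continuous_on_subset[OF assms(1)]) auto
  then obtain A where A: "\<forall>z\<in>f ` ?Q. norm z \<le> A" using compact_imp_bounded bounded_iff by metis
  have "\<bar>f y\<bar> \<le> A * \<rho> y powr d" for y
  proof -
    define x where "x = dil \<sigma> (1 / \<rho> y) y"
    have "y = dil \<sigma> (\<rho> y) x"
      using \<rho>_pos[of y] by (simp add: x_def dil_def vec_eq_iff powr_mult[symmetric])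
    then have "f y = \<rho> y powr d * f x" using hom \<rho>_pos by metis
    moreover have "\<bar>x$i\<bar> \<le> 1" for i
      using \<rho>_dominates[of y i] \<rho>_pos[of y]
      by (simp add: x_def dil_def powr_divide abs_mult divide_le_eq_1)
    then have "x \<in> ?Q" by (auto simp: mem_box_cart abs_le_iff)
    ultimately have "\<bar>f y\<bar> = \<bar>f x\<bar> * \<rho> y powr d" "\<bar>f x\<bar> \<le> A"
      using A by (auto simp: abs_mult)
    then show ?thesis by (simp add: mult_right_mono)
  qed
  then show ?thesis by blast
qed

section \<open>The barrier\<close>

definition bracket_powr_deriv :: "real \<Rightarrow> real \<Rightarrow> real" where
  "bracket_powr_deriv e s = 2 * e * s * (1 + s\<^sup>2) powr (e - 1)"

definition bracket_powr_deriv2 :: "real \<Rightarrow> real \<Rightarrow> real" where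
  "bracket_powr_deriv2 e s = 2 * e * (1 + s\<^sup>2) powr (e - 1) + 4 * e * (e - 1) * s\<^sup>2 * (1 + s\<^sup>2) powr (e - 2)"

lemma one_plus_square_pos [simp]: "0 < 1 + (s::real)\<^sup>2"
  by (simp add: add_pos_nonneg)

lemma has_real_derivative_bracket_powr:
  "((\<lambda>s. (1 + s\<^sup>2) powr e) has_real_derivative bracket_powr_deriv e s) (at s)"
  unfolding bracket_powr_deriv_def
  by (auto intro!: derivative_eq_intros simp: powr_diff field_simps)

lemma has_real_derivative_bracket_powr_deriv:
  "(bracket_powr_deriv e has_real_derivative bracket_powr_deriv2 e s) (at s)"
proof -
  have "((\<lambda>s. 2 * e * s * (1 + s\<^sup>2) powr (e - 1)) has_real_derivative
      2 * e * (1 + s\<^sup>2) powr (e - 1) + 2 * e * s * bracket_powr_deriv (e - 1) s) (at s)"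
    using DERIV_mult[OF DERIV_cmult[OF DERIV_ident, of "2 * e" s] has_real_derivative_bracket_powr[of "e - 1" s]]
    by (simp add: algebra_simps)
  then show ?thesis
    unfolding bracket_powr_deriv_def[abs_def] bracket_powr_deriv2_def by (simp add: power2_eq_square algebra_simps)
qed

lemma abs_bracket_powr_deriv_le:
  assumes "e \<ge> 0"
  shows "\<bar>bracket_powr_deriv e s\<bar> \<le> 2 * e * (1 + s\<^sup>2) powr (e - 1/2)"
proof -
  have "\<bar>s\<bar> \<le> (1 + s\<^sup>2) powr (1/2)" by (simp add: powr_half_sqrt real_le_rsqrt)
  then have "\<bar>s\<bar> * (1 + s\<^sup>2) powr (e - 1) \<le> (1 + s\<^sup>2) powr (1/2) * (1 + s\<^sup>2) powr (e - 1)"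
    by (simp add: mult_right_mono)
  also have "\<dots> = (1 + s\<^sup>2) powr (e - 1/2)" by (simp add: powr_add[symmetric])
  finally show ?thesis
    using assms by (simp add: bracket_powr_deriv_def abs_mult mult.assoc mult_left_mono)
qed

lemma abs_bracket_powr_deriv2_le:
  assumes "e \<ge> 1"
  shows "\<bar>bracket_powr_deriv2 e s\<bar> \<le> 2 * e * (2 * e - 1) * (1 + s\<^sup>2) powr (e - 1)"
proof -
  define P where "P = (1 + s\<^sup>2) powr (e - 1)"
  define Q where "Q = s\<^sup>2 * (1 + s\<^sup>2) powr (e - 2)"
  have "Q \<le> (1 + s\<^sup>2) * (1 + s\<^sup>2) powr (e - 2)"
    unfolding Q_def by (simp add: mult_right_mono)
  also have "\<dots> = P" using powr_add[of "1 + s\<^sup>2" 1 "e - 2"] by (simp add: P_def)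
  finally have "4 * e * (e - 1) * Q \<le> 4 * e * (e - 1) * P"
    using assms by (simp add: mult_left_mono)
  moreover have "bracket_powr_deriv2 e s = 2 * e * P + 4 * e * (e - 1) * Q"
    by (simp add: bracket_powr_deriv2_def P_def Q_def)
  moreover have "0 \<le> 2 * e * P" "0 \<le> 4 * e * (e - 1) * Q"
    using assms by (simp_all add: P_def Q_def)
  ultimately have "\<bar>bracket_powr_deriv2 e s\<bar> \<le> 2 * e * P + 4 * e * (e - 1) * P" by linarith
  then show ?thesis unfolding P_def by (simp add: algebra_simps)
qed

definition hom_dim :: "('n::finite \<Rightarrow> real) \<Rightarrow> real" where
  "hom_dim \<sigma> = (\<Sum>k\<in>UNIV. \<sigma> k)"

definition barrier_exp :: "('n::finite \<Rightarrow> real) \<Rightarrow> 'n \<Rightarrow> real" where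
  "barrier_exp \<sigma> i = hom_dim \<sigma> / \<sigma> i"

definition barrier :: "('n::finite \<Rightarrow> real) \<Rightarrow> real^'n \<Rightarrow> real" where
  "barrier \<sigma> y = (\<Sum>i\<in>UNIV. (1 + (y$i)\<^sup>2) powr barrier_exp \<sigma> i)"

definition hom_gauge :: "('n::finite \<Rightarrow> real) \<Rightarrow> real^'n \<Rightarrow> real" where
  "hom_gauge \<sigma> y = barrier \<sigma> y powr (1 / (2 * hom_dim \<sigma>))"

lemma barrier_gderiv:
  "GDERIV (barrier \<sigma>) y :> (\<chi> i. bracket_powr_deriv (barrier_exp \<sigma> i) (y$i))"
proof -
  have "((\<lambda>y. (1 + (y$i)\<^sup>2) powr barrier_exp \<sigma> i) has_derivative
      (\<lambda>h. h$i * bracket_powr_deriv (barrier_exp \<sigma> i) (y$i))) (at y)" for i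
    using has_derivative_compose[OF has_derivative_component
        has_real_derivative_bracket_powr[unfolded has_field_derivative_def]]
    by (simp add: o_def mult.commute)
  then have "(barrier \<sigma> has_derivative
      (\<lambda>h. \<Sum>i\<in>UNIV. h$i * bracket_powr_deriv (barrier_exp \<sigma> i) (y$i))) (at y)"
    unfolding barrier_def[abs_def] by (intro has_derivative_sum) auto
  then show ?thesis unfolding gderiv_def by (simp add: inner_vec_def)
qed

lemma barrier_hessian:
  "((\<lambda>y. \<chi> i. bracket_powr_deriv (barrier_exp \<sigma> i) (y$i)) has_derivative
    (\<lambda>h. \<chi> i. bracket_powr_deriv2 (barrier_exp \<sigma> i) (x$i) * h$i)) (at x)"
proof (rule has_derivative_vec_lambda)
  fix i
  show "((\<lambda>y. bracket_powr_deriv (barrier_exp \<sigma> i) (y$i)) has_derivative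
      (\<lambda>h. bracket_powr_deriv2 (barrier_exp \<sigma> i) (x$i) * h$i)) (at x)"
    using has_derivative_compose[OF has_derivative_component
        has_real_derivative_bracket_powr_deriv[unfolded has_field_derivative_def]]
    by (simp add: o_def mult.commute)
qed

lemma vf_act_twice_barrier:
  assumes "smooth_vf X"
  shows "vf_act X (vf_act X (barrier \<sigma>)) y =
    (\<Sum>i\<in>UNIV. vf_act X (\<lambda>z. X z $ i) y * bracket_powr_deriv (barrier_exp \<sigma> i) (y$i)
               + (X y $ i)\<^sup>2 * bracket_powr_deriv2 (barrier_exp \<sigma> i) (y$i))"
  using vf_act_twice[OF barrier_gderiv barrier_hessian smooth_vf_has_derivative[OF assms]]
  by (simp add: inner_vec_def vf_act_def power2_eq_square sum.distrib mult_ac)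

context
  fixes \<sigma> :: "'n::finite \<Rightarrow> real"
  assumes \<sigma>_pos: "\<And>i. 0 < \<sigma> i"
begin

lemma hom_dim_ge: "\<sigma> i \<le> hom_dim \<sigma>"
  unfolding hom_dim_def by (rule member_le_sum) (auto intro: less_imp_le \<sigma>_pos)

lemma barrier_exp_ge_1: "1 \<le> barrier_exp \<sigma> i"
  unfolding barrier_exp_def using hom_dim_ge[of i] \<sigma>_pos[of i] by simp

lemma bracket_powr_le_barrier: "(1 + (y$i)\<^sup>2) powr barrier_exp \<sigma> i \<le> barrier \<sigma> y"
  unfolding barrier_def by (rule member_le_sum) auto

lemma barrier_ge_1: "1 \<le> barrier \<sigma> y"
proof -
  have "1 \<le> (1 + (y$i)\<^sup>2) powr barrier_exp \<sigma> i" for i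
    using barrier_exp_ge_1[of i] by (intro ge_one_powr_ge_zero) auto
  then show ?thesis using bracket_powr_le_barrier order_trans by blast
qed

lemma norm_le_barrier: "norm y \<le> barrier \<sigma> y"
proof -
  have "\<bar>y$i\<bar> \<le> (1 + (y$i)\<^sup>2) powr barrier_exp \<sigma> i" for i
  proof -
    have "\<bar>y$i\<bar> \<le> (1 + (y$i)\<^sup>2) powr (1/2)" by (simp add: powr_half_sqrt real_le_rsqrt)
    also have "\<dots> \<le> (1 + (y$i)\<^sup>2) powr barrier_exp \<sigma> i"
      using barrier_exp_ge_1[of i] by (intro powr_mono) auto
    finally show ?thesis .
  qed
  then have "(\<Sum>i\<in>UNIV. \<bar>y$i\<bar>) \<le> barrier \<sigma> y" unfolding barrier_def by (intro sum_mono)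
  then show ?thesis using norm_le_l1_cart[of y] by linarith
qed

lemma hom_gauge_ge_1: "1 \<le> hom_gauge \<sigma> y"
  unfolding hom_gauge_def using barrier_ge_1 hom_dim_ge[of undefined] \<sigma>_pos[of undefined]
  by (intro ge_one_powr_ge_zero) auto

lemma hom_gauge_powr_hom_dim: "hom_gauge \<sigma> y powr (2 * hom_dim \<sigma>) = barrier \<sigma> y"
  unfolding hom_gauge_def using hom_dim_ge[of undefined] \<sigma>_pos[of undefined] barrier_ge_1[of y]
  by (simp add: powr_powr)

lemma bracket_powr_le_hom_gauge:
  assumes "0 \<le> \<alpha>"
  shows "(1 + (y$i)\<^sup>2) powr \<alpha> \<le> hom_gauge \<sigma> y powr (2 * \<sigma> i * \<alpha>)"
proof -
  have e: "barrier_exp \<sigma> i * (\<alpha> * \<sigma> i / hom_dim \<sigma>) = \<alpha>"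
    using \<sigma>_pos[of i] hom_dim_ge[of i] by (simp add: barrier_exp_def)
  have "(1 + (y$i)\<^sup>2) powr \<alpha> = ((1 + (y$i)\<^sup>2) powr barrier_exp \<sigma> i) powr (\<alpha> * \<sigma> i / hom_dim \<sigma>)"
    unfolding powr_powr e ..
  also have "\<dots> \<le> barrier \<sigma> y powr (\<alpha> * \<sigma> i / hom_dim \<sigma>)"
    using assms \<sigma>_pos[of i] hom_dim_ge[of i] bracket_powr_le_barrier
    by (intro powr_mono2) auto
  also have "\<dots> = hom_gauge \<sigma> y powr (2 * \<sigma> i * \<alpha>)"
    using \<sigma>_pos[of i] hom_dim_ge[of i] by (simp add: hom_gauge_def powr_powr mult.commute)
  finally show ?thesis .
qed

lemma abs_component_le_hom_gauge: "\<bar>y$i\<bar> \<le> hom_gauge \<sigma> y powr \<sigma> i"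
proof -
  have "\<bar>y$i\<bar> \<le> (1 + (y$i)\<^sup>2) powr (1/2)" by (simp add: powr_half_sqrt real_le_rsqrt)
  also have "\<dots> \<le> hom_gauge \<sigma> y powr \<sigma> i" using bracket_powr_le_hom_gauge[of "1/2" y i] by simp
  finally show ?thesis .
qed

lemma abs_bracket_powr_deriv_le_hom_gauge:
  "\<bar>bracket_powr_deriv (barrier_exp \<sigma> i) (y$i)\<bar>
    \<le> 2 * barrier_exp \<sigma> i * hom_gauge \<sigma> y powr (2 * hom_dim \<sigma> - \<sigma> i)"
proof -
  let ?e = "barrier_exp \<sigma> i"
  have "\<bar>bracket_powr_deriv ?e (y$i)\<bar> \<le> 2 * ?e * (1 + (y$i)\<^sup>2) powr (?e - 1/2)"
    using barrier_exp_ge_1[of i] by (intro abs_bracket_powr_deriv_le) simp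
  also have "\<dots> \<le> 2 * ?e * hom_gauge \<sigma> y powr (2 * \<sigma> i * (?e - 1/2))"
    using barrier_exp_ge_1[of i] by (intro mult_left_mono bracket_powr_le_hom_gauge) auto
  also have "2 * \<sigma> i * (?e - 1/2) = 2 * hom_dim \<sigma> - \<sigma> i"
    using \<sigma>_pos[of i] by (simp add: barrier_exp_def algebra_simps)
  finally show ?thesis .
qed

lemma abs_bracket_powr_deriv2_le_hom_gauge:
  "\<bar>bracket_powr_deriv2 (barrier_exp \<sigma> i) (y$i)\<bar>
    \<le> 2 * barrier_exp \<sigma> i * (2 * barrier_exp \<sigma> i - 1) * hom_gauge \<sigma> y powr (2 * hom_dim \<sigma> - 2 * \<sigma> i)"
proof -
  let ?e = "barrier_exp \<sigma> i"
  have "\<bar>bracket_powr_deriv2 ?e (y$i)\<bar> \<le> 2 * ?e * (2 * ?e - 1) * (1 + (y$i)\<^sup>2) powr (?e - 1)"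
    using barrier_exp_ge_1[of i] by (rule abs_bracket_powr_deriv2_le)
  also have "\<dots> \<le> 2 * ?e * (2 * ?e - 1) * hom_gauge \<sigma> y powr (2 * \<sigma> i * (?e - 1))"
    using barrier_exp_ge_1[of i] by (intro mult_left_mono bracket_powr_le_hom_gauge) auto
  also have "2 * \<sigma> i * (?e - 1) = 2 * hom_dim \<sigma> - 2 * \<sigma> i"
    using \<sigma>_pos[of i] by (simp add: barrier_exp_def algebra_simps)
  finally show ?thesis .
qed

text \<open>The exponents of the gauge add up to \<open>2Q - 2\<close> in both terms, which is what makes
  the barrier a supersolution up to a constant.\<close>

lemma barrier_term_le:
  assumes a: "\<bar>a\<bar> \<le> A * hom_gauge \<sigma> y powr (\<sigma> i - 1)"
    and b: "\<bar>b\<bar> \<le> B * hom_gauge \<sigma> y powr (\<sigma> i - 2)"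
  defines "e \<equiv> barrier_exp \<sigma> i"
  shows "b * bracket_powr_deriv e (y$i) + a\<^sup>2 * bracket_powr_deriv2 e (y$i)
         \<le> (2 * e * B + 2 * e * (2 * e - 1) * A\<^sup>2) * barrier \<sigma> y"
proof -
  let ?g = "hom_gauge \<sigma> y" and ?Q = "hom_dim \<sigma>"
  have g1: "1 \<le> ?g" by (rule hom_gauge_ge_1)
  have e1: "1 \<le> e" unfolding e_def by (rule barrier_exp_ge_1)
  have "0 \<le> B" using b g1 by (smt (verit) powr_gt_zero zero_le_mult_iff)
  have g_mult: "?g powr (\<sigma> i - 2) * ?g powr (2 * ?Q - \<sigma> i) = ?g powr (2 * ?Q - 2)"
    "(?g powr (\<sigma> i - 1))\<^sup>2 * ?g powr (2 * ?Q - 2 * \<sigma> i) = ?g powr (2 * ?Q - 2)"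
    by (simp_all add: power2_eq_square powr_add[symmetric])
  have "\<bar>b * bracket_powr_deriv e (y$i)\<bar> \<le> (B * ?g powr (\<sigma> i - 2)) * (2 * e * ?g powr (2 * ?Q - \<sigma> i))"
    unfolding abs_mult e_def using b abs_bracket_powr_deriv_le_hom_gauge by (intro mult_mono) auto
  also have "\<dots> = 2 * e * B * ?g powr (2 * ?Q - 2)"
    using g_mult(1) by (simp add: mult_ac)
  finally have t1: "\<bar>b * bracket_powr_deriv e (y$i)\<bar> \<le> 2 * e * B * ?g powr (2 * ?Q - 2)" .
  have "a\<^sup>2 \<le> (A * ?g powr (\<sigma> i - 1))\<^sup>2"
    using a by (metis abs_ge_zero power2_abs power_mono)
  then have "\<bar>a\<^sup>2 * bracket_powr_deriv2 e (y$i)\<bar>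
      \<le> (A * ?g powr (\<sigma> i - 1))\<^sup>2 * (2 * e * (2 * e - 1) * ?g powr (2 * ?Q - 2 * \<sigma> i))"
    unfolding abs_mult e_def using abs_bracket_powr_deriv2_le_hom_gauge by (intro mult_mono) auto
  also have "\<dots> = 2 * e * (2 * e - 1) * A\<^sup>2 * ?g powr (2 * ?Q - 2)"
    using g_mult(2) by (simp add: power_mult_distrib mult_ac)
  finally have t2: "\<bar>a\<^sup>2 * bracket_powr_deriv2 e (y$i)\<bar> \<le> 2 * e * (2 * e - 1) * A\<^sup>2 * ?g powr (2 * ?Q - 2)" .
  have "?g powr (2 * ?Q - 2) \<le> ?g powr (2 * ?Q)" using g1 by (intro powr_mono) auto
  then have "?g powr (2 * ?Q - 2) \<le> barrier \<sigma> y" by (simp add: hom_gauge_powr_hom_dim)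
  moreover have "0 \<le> 2 * e * B" "0 \<le> 2 * e * (2 * e - 1) * A\<^sup>2" using e1 \<open>0 \<le> B\<close> by auto
  ultimately have "2 * e * B * ?g powr (2 * ?Q - 2) + 2 * e * (2 * e - 1) * A\<^sup>2 * ?g powr (2 * ?Q - 2)
      \<le> (2 * e * B + 2 * e * (2 * e - 1) * A\<^sup>2) * barrier \<sigma> y"
    by (simp add: distrib_right add_mono mult_left_mono)
  then show ?thesis using t1 t2 by linarith
qed

lemma vf_act_twice_barrier_le:
  assumes X: "smooth_vf X"
    and hom: "\<And>r f x. r > 0 \<Longrightarrow> smooth_fun f \<Longrightarrow>
                vf_act X (f \<circ> dil \<sigma> r) x = r * vf_act X f (dil \<sigma> r x)"
  shows "\<exists>K. \<forall>y. vf_act X (vf_act X (barrier \<sigma>)) y \<le> K * barrier \<sigma> y"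
proof -
  have sm: "smooth_fun (\<lambda>y. X y $ i)" for i using X by (simp add: smooth_vf_def)
  have "\<exists>A. \<forall>y. \<bar>X y $ i\<bar> \<le> A * hom_gauge \<sigma> y powr (\<sigma> i - 1)" for i
    using vf_component_dil[OF hom] smooth_fun_continuous[OF sm]
      hom_gauge_ge_1 abs_component_le_hom_gauge
    by (intro dil_homogeneous_bound[where \<sigma>=\<sigma>]) (auto simp: less_le_trans[OF zero_less_one])
  then obtain A where A: "\<And>i y. \<bar>X y $ i\<bar> \<le> A i * hom_gauge \<sigma> y powr (\<sigma> i - 1)" by metis
  have "\<exists>B. \<forall>y. \<bar>vf_act X (\<lambda>z. X z $ i) y\<bar> \<le> B * hom_gauge \<sigma> y powr (\<sigma> i - 2)" for i
    using vf_act_component_dil[OF hom _ sm] vf_act_component_continuous[OF X]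
      hom_gauge_ge_1 abs_component_le_hom_gauge
    by (intro dil_homogeneous_bound[where \<sigma>=\<sigma>]) (auto simp: less_le_trans[OF zero_less_one])
  then obtain B where B: "\<And>i y. \<bar>vf_act X (\<lambda>z. X z $ i) y\<bar> \<le> B i * hom_gauge \<sigma> y powr (\<sigma> i - 2)"
    by metis
  let ?e = "barrier_exp \<sigma>"
  define K where "K = (\<Sum>i\<in>UNIV. 2 * ?e i * B i + 2 * ?e i * (2 * ?e i - 1) * (A i)\<^sup>2)"
  have "vf_act X (vf_act X (barrier \<sigma>)) y \<le> K * barrier \<sigma> y" for y
    unfolding vf_act_twice_barrier[OF X] K_def sum_distrib_right
    by (intro sum_mono barrier_term_le[OF A B])
  then show ?thesis by blast
qed

lemma sum_vf_act_twice_barrier_le: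
  assumes X: "\<forall>j<m. smooth_vf (X j)"
    and hom: "\<forall>r>0. \<forall>f. smooth_fun f \<longrightarrow> (\<forall>j<m. \<forall>x.
                vf_act (X j) (f \<circ> dil \<sigma> r) x = r * vf_act (X j) f (dil \<sigma> r x))"
  shows "\<exists>K. \<forall>y. (\<Sum>j<m. vf_act (X j) (vf_act (X j) (barrier \<sigma>)) y) \<le> K * barrier \<sigma> y"
proof -
  have "\<exists>K. \<forall>y. vf_act (X j) (vf_act (X j) (barrier \<sigma>)) y \<le> K * barrier \<sigma> y" if "j < m" for j
    using X hom that by (intro vf_act_twice_barrier_le) auto
  then obtain K where "\<And>j y. j < m \<Longrightarrow> vf_act (X j) (vf_act (X j) (barrier \<sigma>)) y \<le> K j * barrier \<sigma> y"
    by metis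
  then have "(\<Sum>j<m. vf_act (X j) (vf_act (X j) (barrier \<sigma>)) y) \<le> (\<Sum>j<m. K j) * barrier \<sigma> y" for y
    unfolding sum_distrib_right by (intro sum_mono) auto
  then show ?thesis by blast
qed

end

section \<open>Maximum principle\<close>

definition spatial_grad :: "(real \<times> (real^'n::finite) \<Rightarrow> real) \<Rightarrow> real \<Rightarrow> real^'n \<Rightarrow> real^'n" where
  "spatial_grad u t y = (\<chi> k. frechet_derivative u (at (t, y)) (0, axis k 1))"

lemma has_derivative_slice:
  assumes "(u has_derivative u') (at (t, y))"
  shows "((\<lambda>z. u (t, z)) has_derivative (\<lambda>v. u' (0, v))) (at y)"
  using has_derivative_compose[OF has_derivative_Pair[OF has_derivative_const has_derivative_ident] assms]
  by (simp add: o_def)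

lemma gderiv_spatial_grad:
  fixes u :: "real \<times> (real^'n::finite) \<Rightarrow> real"
  assumes "u differentiable (at (t, y))"
  shows "GDERIV (\<lambda>z. u (t, z)) y :> spatial_grad u t y"
proof -
  have du: "(u has_derivative frechet_derivative u (at (t, y))) (at (t, y))"
    using assms frechet_derivative_works by blast
  have "linear (\<lambda>v::real^'n. frechet_derivative u (at (t, y)) (0, v))"
    using has_derivative_linear[OF has_derivative_slice[OF du]] .
  then have "frechet_derivative u (at (t, y)) (0, v) = v \<bullet> spatial_grad u t y" for v
    unfolding spatial_grad_def by (rule linear_eq_inner_axis)
  with has_derivative_slice[OF du] show ?thesis unfolding gderiv_def by simp
qed

lemma spatial_grad_differentiable:
  fixes u :: "real \<times> (real^'n::finite) \<Rightarrow> real"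
  assumes "\<forall>b\<in>Basis. (\<lambda>q. frechet_derivative u (at q) b) differentiable (at (t, x))"
  shows "spatial_grad u t differentiable (at x)"
proof -
  have "(\<lambda>y. frechet_derivative u (at (t, y)) (0, axis k 1)) differentiable (at x)" for k
  proof -
    have "(0, axis k 1) \<in> (Basis :: (real \<times> (real^'n)) set)"
      by (simp add: Basis_prod_def)
    with assms have "(\<lambda>q. frechet_derivative u (at q) (0, axis k 1)) differentiable (at (t, x))" by blast
    then show ?thesis
      using differentiable_chain_at[of "\<lambda>y. (t, y)" x] by (simp add: o_def)
  qed
  then obtain D where "\<And>k. ((\<lambda>y. frechet_derivative u (at (t, y)) (0, axis k 1)) has_derivative D k) (at x)"
    unfolding differentiable_def by metis
  from has_derivative_vec_lambda[where f'=D, OF this] show ?thesis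
    unfolding spatial_grad_def differentiable_def by blast
qed

lemma sum_vf_act_twice_le_at_spatial_max:
  fixes u :: "real \<times> (real^'n::finite) \<Rightarrow> real" and \<psi> :: "real^'n \<Rightarrow> real"
  assumes X: "\<forall>j<m. smooth_vf (X j)" and u: "Ck_on 2 ({0<..} \<times> UNIV) u" and "0 < t"
    and \<psi>: "\<And>y. GDERIV \<psi> y :> g\<psi> y" "(g\<psi> has_derivative H\<psi>) (at x)"
    and "0 < e" and max: "\<forall>y\<in>ball x e. s * u (t, y) - c * \<psi> y \<le> s * u (t, x) - c * \<psi> x"
  shows "s * (\<Sum>j<m. vf_act (X j) (vf_act (X j) (\<lambda>z. u (t, z))) x)
    \<le> c * (\<Sum>j<m. vf_act (X j) (vf_act (X j) \<psi>) x)"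
proof -
  have dU: "u differentiable (at (t, y))" for y
    using u \<open>0 < t\<close> by (simp add: numeral_2_eq_2)
  have "\<forall>b\<in>Basis. (\<lambda>q. frechet_derivative u (at q) b) differentiable (at (t, x))"
    using u \<open>0 < t\<close> by (simp add: numeral_2_eq_2)
  then have Hu: "(spatial_grad u t has_derivative frechet_derivative (spatial_grad u t) (at x)) (at x)"
    using spatial_grad_differentiable frechet_derivative_works by blast
  have "s * vf_act (X j) (vf_act (X j) (\<lambda>z. u (t, z))) x \<le> c * vf_act (X j) (vf_act (X j) \<psi>) x"
    if "j < m" for j
    using X that by (intro vf_act_twice_le_at_local_max[OF gderiv_spatial_grad[OF dU] Hu \<psi>
          smooth_vf_has_derivative \<open>0 < e\<close> max]) auto
  then show ?thesis by (auto simp: sum_distrib_left intro!: sum_mono)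
qed

lemma solution_minus_barrier_no_local_max:
  fixes u :: "real \<times> (real^'n::finite) \<Rightarrow> real" and \<psi> :: "real^'n \<Rightarrow> real" and s \<epsilon> C :: real
  assumes X: "\<forall>j<m. smooth_vf (X j)"
    and u: "Ck_on 2 ({0<..} \<times> UNIV) u" and heat: "\<forall>p\<in>{0<..} \<times> UNIV. heat_op X m u p = 0"
    and \<psi>: "\<And>y. GDERIV \<psi> y :> g\<psi> y" "\<And>x. (g\<psi> has_derivative H\<psi> x) (at x)" "\<And>y. 0 < \<psi> y"
    and super: "\<And>y. (\<Sum>j<m. vf_act (X j) (vf_act (X j) \<psi>) y) \<le> K * \<psi> y"
    and "K < C" "0 < \<epsilon>" "0 < t" "0 < e" "0 < d"
  defines "W \<equiv> \<lambda>p. s * u p - \<epsilon> * exp (C * fst p) * \<psi> (snd p)"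
  assumes space_max: "\<forall>y\<in>ball x e. W (t, y) \<le> W (t, x)"
    and time_max: "\<forall>\<tau>. t - d < \<tau> \<and> \<tau> \<le> t \<longrightarrow> W (\<tau>, x) \<le> W (t, x)"
  shows False
proof -
  define c where "c = \<epsilon> * exp (C * t)"
  have "c > 0" using \<open>0 < \<epsilon>\<close> by (simp add: c_def)
  have "s * (\<Sum>j<m. vf_act (X j) (vf_act (X j) (\<lambda>z. u (t, z))) x)
      \<le> c * (\<Sum>j<m. vf_act (X j) (vf_act (X j) \<psi>) x)"
    using space_max by (intro sum_vf_act_twice_le_at_spatial_max[OF X u \<open>0 < t\<close> \<psi>(1,2) \<open>0 < e\<close>])
      (simp add: W_def c_def)
  also have "\<dots> \<le> c * (K * \<psi> x)" using super \<open>c > 0\<close> by (simp add: mult_left_mono)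
  finally have space: "s * (\<Sum>j<m. vf_act (X j) (vf_act (X j) (\<lambda>z. u (t, z))) x) \<le> c * K * \<psi> x"
    by simp
  define ut where "ut = deriv (\<lambda>\<tau>. u (\<tau>, x)) t"
  have "u differentiable (at (t, x))" using u \<open>0 < t\<close> by (simp add: numeral_2_eq_2)
  then have "(\<lambda>\<tau>. u (\<tau>, x)) differentiable (at t)"
    using differentiable_chain_at[of "\<lambda>\<tau>. (\<tau>, x)" t u] by (simp add: o_def)
  then have "((\<lambda>\<tau>. u (\<tau>, x)) has_real_derivative ut) (at t)"
    by (simp add: ut_def DERIV_deriv_iff_real_differentiable)
  then have "((\<lambda>\<tau>. W (\<tau>, x)) has_real_derivative s * ut - \<epsilon> * (exp (C * t) * C) * \<psi> x) (at t)"
    unfolding W_def by (auto intro!: derivative_eq_intros)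
  from deriv_nonneg_at_left_max[OF this time_max \<open>0 < d\<close>]
  have time: "c * C * \<psi> x \<le> s * ut" by (simp add: c_def mult_ac)
  have "(\<Sum>j<m. vf_act (X j) (vf_act (X j) (\<lambda>z. u (t, z))) x) = ut"
    using heat \<open>0 < t\<close> by (auto simp: heat_op_def ut_def)
  with space time have "c * (C - K) * \<psi> x \<le> 0" by (simp add: algebra_simps)
  moreover have "0 < c * (C - K) * \<psi> x" using \<open>c > 0\<close> \<open>K < C\<close> \<psi>(3) by simp
  ultimately show False by simp
qed

lemma parabolic_cylinder_max:
  fixes W :: "real \<times> 'a::euclidean_space \<Rightarrow> real"
  assumes cont: "continuous_on ({0..} \<times> UNIV) W" and init: "\<forall>y. W (0, y) \<le> 0"
    and outside: "\<forall>t\<ge>0. \<forall>y. R \<le> norm y \<longrightarrow> W (t, y) \<le> 0"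
    and "0 \<le> t1" and pos: "0 < W (t1, x1)"
  obtains t0 x0 where "0 < t0" "t0 \<le> t1" "norm x0 < R"
    "\<forall>t\<in>{0..t1}. \<forall>y\<in>cball 0 R. W (t, y) \<le> W (t0, x0)"
proof -
  let ?K = "{0..t1} \<times> cball 0 R"
  have "norm x1 < R" using outside pos \<open>0 \<le> t1\<close> by (metis not_le)
  then have "(t1, x1) \<in> ?K" using \<open>0 \<le> t1\<close> by simp
  moreover have "continuous_on ?K W" by (rule continuous_on_subset[OF cont]) auto
  ultimately obtain p0 where p0: "p0 \<in> ?K" "\<forall>q\<in>?K. W q \<le> W p0"
    using continuous_attains_sup[OF compact_Times[OF compact_Icc compact_cball]] by blast
  obtain t0 x0 where p0_eq: "p0 = (t0, x0)" by fastforce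
  have "W (t1, x1) \<le> W (t0, x0)" using p0(2) \<open>(t1, x1) \<in> ?K\<close> p0_eq by blast
  then have "W (t0, x0) > 0" using pos by linarith
  moreover have "0 \<le> t0" "t0 \<le> t1" using p0 p0_eq by auto
  ultimately have "t0 \<noteq> 0" "norm x0 < R" using init outside by (metis not_le)+
  with p0 p0_eq \<open>0 \<le> t0\<close> \<open>t0 \<le> t1\<close> show ?thesis by (intro that) auto
qed

lemma bounded_le_barrier_far:
  fixes u :: "real \<times> (real^'n::finite) \<Rightarrow> real" and \<psi> :: "real^'n \<Rightarrow> real"
  assumes init: "\<forall>x. u (0, x) = 0" and bdd: "\<forall>p\<in>{0<..} \<times> UNIV. \<bar>u p\<bar> \<le> M"
    and \<psi>: "\<And>y. norm y \<le> \<psi> y" "\<And>y. 0 < \<psi> y"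
    and "0 < C" "0 < \<epsilon>" "0 \<le> t" and far: "\<bar>s\<bar> * \<bar>M\<bar> / \<epsilon> + 1 \<le> norm y"
  shows "s * u (t, y) \<le> \<epsilon> * exp (C * t) * \<psi> y"
proof (cases "t = 0")
  case True
  then show ?thesis using init \<psi>(2) \<open>0 < \<epsilon>\<close> by (simp add: less_imp_le)
next
  case False
  then have "(t, y) \<in> {0<..} \<times> UNIV" using \<open>0 \<le> t\<close> by simp
  then have "\<bar>u (t, y)\<bar> \<le> M" using bdd by blast
  have "s * u (t, y) \<le> \<bar>s\<bar> * \<bar>u (t, y)\<bar>" by (metis abs_ge_self abs_mult)
  also have "\<dots> \<le> \<bar>s\<bar> * \<bar>M\<bar>" using \<open>\<bar>u (t, y)\<bar> \<le> M\<close> by (intro mult_left_mono) auto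
  also have "\<dots> < \<epsilon> * (\<bar>s\<bar> * \<bar>M\<bar> / \<epsilon> + 1)" using \<open>0 < \<epsilon>\<close> by (simp add: field_simps)
  also have "\<dots> \<le> \<epsilon> * \<psi> y" using far \<psi>(1)[of y] \<open>0 < \<epsilon>\<close> by simp
  also have "\<dots> \<le> \<epsilon> * exp (C * t) * \<psi> y"
    using \<open>0 \<le> t\<close> \<open>0 < C\<close> \<open>0 < \<epsilon>\<close> \<psi>(2)[of y] by (simp add: mult_le_cancel_left1 mult_le_cancel_right1)
  finally show ?thesis by simp
qed

lemma solution_le_barrier:
  fixes u :: "real \<times> (real^'n::finite) \<Rightarrow> real" and \<psi> :: "real^'n \<Rightarrow> real" and s \<epsilon> C :: real
  assumes X: "\<forall>j<m. smooth_vf (X j)"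
    and u: "Ck_on 2 ({0<..} \<times> UNIV) u" and heat: "\<forall>p\<in>{0<..} \<times> UNIV. heat_op X m u p = 0"
    and cont: "continuous_on ({0..} \<times> UNIV) u" and init: "\<forall>x. u (0, x) = 0"
    and bdd: "\<forall>p\<in>{0<..} \<times> UNIV. \<bar>u p\<bar> \<le> M"
    and \<psi>: "\<And>y. GDERIV \<psi> y :> g\<psi> y" "\<And>x. (g\<psi> has_derivative H\<psi> x) (at x)"
      "\<And>y. norm y \<le> \<psi> y" "\<And>y. 0 < \<psi> y"
    and super: "\<And>y. (\<Sum>j<m. vf_act (X j) (vf_act (X j) \<psi>) y) \<le> K * \<psi> y"
    and "K < C" "0 < C" "0 < \<epsilon>" "0 \<le> t1"
  shows "s * u (t1, x1) \<le> \<epsilon> * exp (C * t1) * \<psi> x1"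
proof (rule ccontr)
  define W where "W = (\<lambda>p. s * u p - \<epsilon> * exp (C * fst p) * \<psi> (snd p))"
  assume "\<not> ?thesis"
  then have "0 < W (t1, x1)" by (simp add: W_def)
  define R where "R = \<bar>s\<bar> * \<bar>M\<bar> / \<epsilon> + 1"
  have "continuous_on UNIV \<psi>"
    using \<psi>(1) unfolding gderiv_def
    by (intro continuous_at_imp_continuous_on ballI has_derivative_continuous) blast
  then have "continuous_on ({0..} \<times> UNIV) (\<lambda>p. \<psi> (snd p))"
    by (rule continuous_on_compose2[OF _ continuous_on_snd]) auto
  then have "continuous_on ({0..} \<times> UNIV) W"
    unfolding W_def using cont by (intro continuous_intros) auto
  moreover have "\<forall>y. W (0, y) \<le> 0"
    using init \<psi>(4) \<open>0 < \<epsilon>\<close> by (simp add: W_def less_imp_le)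
  moreover have "W (t, y) \<le> 0" if "0 \<le> t" "R \<le> norm y" for t y
    using bounded_le_barrier_far[OF init bdd \<psi>(3,4) \<open>0 < C\<close> \<open>0 < \<epsilon>\<close> that(1), of s y] that(2)
    by (simp add: W_def R_def)
  ultimately obtain t0 x0 where t0: "0 < t0" "t0 \<le> t1" and "norm x0 < R"
    and max: "\<forall>t\<in>{0..t1}. \<forall>y\<in>cball 0 R. W (t, y) \<le> W (t0, x0)"
    using parabolic_cylinder_max[of W R t1 x1] \<open>0 \<le> t1\<close> \<open>0 < W (t1, x1)\<close> by blast
  have "ball x0 (R - norm x0) \<subseteq> cball 0 R"
    by (simp add: ball_subset_cball_iff)
  then show False
    using max t0 \<open>norm x0 < R\<close>
    by (intro solution_minus_barrier_no_local_max[OF X u heat \<psi>(1,2,4) super \<open>K < C\<close> \<open>0 < \<epsilon>\<close>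
          \<open>0 < t0\<close>, where e="R - norm x0" and d=t0 and s=s and x=x0]) (auto simp: W_def)
qed

lemma bounded_solution_vanishes:
  fixes u :: "real \<times> (real^'n::finite) \<Rightarrow> real" and \<psi> :: "real^'n \<Rightarrow> real"
  assumes X: "\<forall>j<m. smooth_vf (X j)"
    and u: "Ck_on 2 ({0<..} \<times> UNIV) u" and heat: "\<forall>p\<in>{0<..} \<times> UNIV. heat_op X m u p = 0"
    and cont: "continuous_on ({0..} \<times> UNIV) u" and init: "\<forall>x. u (0, x) = 0"
    and bdd: "\<exists>M. \<forall>p\<in>{0<..} \<times> UNIV. \<bar>u p\<bar> \<le> M"
    and \<psi>: "\<And>y. GDERIV \<psi> y :> g\<psi> y" "\<And>x. (g\<psi> has_derivative H\<psi> x) (at x)"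
      "\<And>y. norm y \<le> \<psi> y" "\<And>y. 0 < \<psi> y"
    and super: "\<exists>K. \<forall>y. (\<Sum>j<m. vf_act (X j) (vf_act (X j) \<psi>) y) \<le> K * \<psi> y"
  shows "\<forall>p\<in>{0..} \<times> UNIV. u p = 0"
proof (intro ballI)
  fix p :: "real \<times> (real^'n)" assume "p \<in> {0..} \<times> UNIV"
  then obtain t x where p: "p = (t, x)" and "0 \<le> t" by auto
  obtain M where M: "\<forall>p\<in>{0<..} \<times> UNIV. \<bar>u p\<bar> \<le> M" using bdd by blast
  obtain K where K: "\<And>y. (\<Sum>j<m. vf_act (X j) (vf_act (X j) \<psi>) y) \<le> K * \<psi> y" using super by blast
  define b where "b = exp ((max K 0 + 1) * t) * \<psi> x"
  have "b > 0" using \<psi>(4) by (simp add: b_def)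
  have le: "u p * u p \<le> \<epsilon> * b" if "\<epsilon> > 0" for \<epsilon>
    using solution_le_barrier[OF X u heat cont init M \<psi> K _ _ that \<open>0 \<le> t\<close>, of "max K 0 + 1"]
    by (simp add: p b_def mult.assoc)
  then have "u p * u p \<le> 0 + e" if "e > 0" for e
    using le[of "e / b"] \<open>b > 0\<close> that by simp
  then have "u p * u p \<le> 0" by (rule field_le_epsilon)
  then show "u p = 0" by (auto simp: mult_le_0_iff)
qed

theorem proposition4p2:
  fixes \<sigma> :: "'n::{finite,linorder} \<Rightarrow> real"
    and X :: "nat \<Rightarrow> 'n vf" and m :: nat
    and u :: "real \<times> ((real, 'n) vec) \<Rightarrow> real"
  assumes smooth: "\<forall>j<m. smooth_vf (X j)"
    and indep: "vf_indep {..<m} X"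
    and sigma_mono: "mono \<sigma>" and sigma_ge1: "\<forall>i. 1 \<le> \<sigma> i" and sigma_1: "\<exists>i. \<sigma> i = 1"
    and H1: "\<forall>r>0. \<forall>f. smooth_fun f \<longrightarrow> (\<forall>j<m. \<forall>x.
               vf_act (X j) (f \<circ> dil \<sigma> r) x = r * vf_act (X j) f (dil \<sigma> r x))"
    and H2: "dim ((\<lambda>Y. Y 0) ` lie_gen X m) = card (UNIV :: 'n set)"
    and big: "\<exists>B. B \<subseteq> lie_gen X m \<and> finite B \<and> card B = card (UNIV :: 'n set) + 1 \<and> vf_indep B (\<lambda>Y. Y)"
    and C2: "Ck_on 2 ({0<..} \<times> UNIV) u"
    and sol: "\<forall>p\<in>{0<..} \<times> UNIV. heat_op X m u p = 0"
    and cont: "continuous_on ({0..} \<times> UNIV) u"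
    and init: "\<forall>x. u (0, x) = 0"
    and bdd: "\<exists>M. \<forall>p\<in>{0<..} \<times> UNIV. \<bar>u p\<bar> \<le> M"
  shows "\<forall>p\<in>{0..} \<times> UNIV. u p = 0"
proof -
  have \<sigma>_pos: "0 < \<sigma> i" for i using sigma_ge1 by (metis less_le_trans zero_less_one)
  show ?thesis
    by (rule bounded_solution_vanishes[OF smooth C2 sol cont init bdd barrier_gderiv barrier_hessian
          norm_le_barrier[of \<sigma>, OF \<sigma>_pos] order_less_le_trans[OF zero_less_one barrier_ge_1[of \<sigma>, OF \<sigma>_pos]]
          sum_vf_act_twice_barrier_le[of \<sigma>, OF \<sigma>_pos smooth H1]])
qed

end
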